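(* Let $\mathcal C$ be a small cylinder category and $f:X\to X'$ a morphism in $\widetilde{\mathcal C}$. The following are equivalent: (1) for every cofibration $A\hookrightarrow B$ in $\mathcal C$ and every $x:A\to X$, the map $\pi_{B/A}(f,x):\pi_{B/A}(X,x)\to\pi_{B/A}(X',f\circ x)$ is bijective; (2) for all such data this map is surjective; (3) $f$ is a weak equivalence in $\widetilde{\mathcal C}$.
   Context: A cylinder category is a category $\mathcal C$ with two classes of morphisms, the cofibrations and the weak equivalences (morphisms in both classes are called trivial cofibrations), such that: (1) both classes contain all isomorphisms and are closed under composition; (2) weak equivalences satisfy 2-out-of-6: if $f,g,h$ are composable and $f\circ g$, $g\circ h$ are weak equivalences then $f,g,h,f\circ g\circ h$ are; (3) $\mathcal C$ has an initial object $0$ and every $0\to X$ is a cofibration; (4) pushouts of cofibrations along arbitrary maps exist and are cofibrations; (5) pushouts of trivial cofibrations are trivial cofibrations; (6) for every object $X$ the codiagonal $X\sqcup X\to X$ factors as a cofibration $X\sqcup X\hookrightarrow IX$ followed by a weak equivalence $IX\to X$; (7) every trivial cofibration admits a retraction. For a cofibration $A\hookrightarrow B$, a relative cylinder object is a factorization $B\sqcup_A B\hookrightarrow I_AB\xrightarrow{\sim}B$ of the codiagonal into a cofibration followed by a weak equivalence. For a small cylinder category $\mathcal C$, $\widetilde{\mathcal C}$ is the category of presheaves of sets on $\mathcal C$ sending the initial object to a singleton and pushouts along cofibrations to pullbacks of sets; $\mathcal C$ is identified with its image under the Yoneda embedding. A morphism $f:X\to Y$ of $\widetilde{\mathcal C}$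 is a weak equivalence if for every cofibration $i:A\hookrightarrow B$ of $\mathcal C$ and every commutative square with top $u:A\to X$ and bottom $w:B\to Y$ (so $f\circ u=w\circ i$), there exist $a:B\to X$ with $a\circ i=u$ and $h:I_AB\to Y$ for some relative cylinder object such that $h$ restricted along the two inclusions $B\to I_AB$ is $f\circ a$ and $w$. For $X\in\widetilde{\mathcal C}$, a cofibration $i:A\hookrightarrow B$ in $\mathcal C$ and $x:A\to X$, $\pi_{B/A}(X,x)$ is the set of maps $g:B\to X$ with $g\circ i=x$ modulo the relation $g\sim_A g'$ iff $(g,g'):B\sqcup_AB\to X$ extends to $I_AB\to X$ for some relative cylinder object (an equivalence relation). A morphism $f:X\to X'$ induces $\pi_{B/A}(f,x):\pi_{B/A}(X,x)\to\pi_{B/A}(X',f\circ x)$, $g\mapsto f\circ g$. *)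

theory Defs
  imports Main
begin

text \<open>A small category: objects of type 'o, morphisms of type 'm (carrier sets Ob, Ar),
  domain/codomain maps, composition (comp g f = g after f) and identities, together
  with the two classes of cofibrations and weak equivalences.\<close>

record ('o, 'm) cylcat =
  Ob   :: "'o set"
  Ar   :: "'m set"
  dom  :: "'m \<Rightarrow> 'o"
  cod  :: "'m \<Rightarrow> 'o"
  comp :: "'m \<Rightarrow> 'm \<Rightarrow> 'm"
  idm  :: "'o \<Rightarrow> 'm"
  cof  :: "'m set"
  we   :: "'m set"

definition hom :: "('o, 'm) cylcat \<Rightarrow> 'o \<Rightarrow> 'o \<Rightarrow> 'm set" where
  "hom C a b = {u \<in> Ar C. dom C u = a \<and> cod C u = b}"

definition category :: "('o, 'm) cylcat \<Rightarrow> bool" where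
  "category C \<longleftrightarrow>
     (\<forall>u\<in>Ar C. dom C u \<in> Ob C \<and> cod C u \<in> Ob C) \<and>
     (\<forall>a\<in>Ob C. idm C a \<in> hom C a a) \<and>
     (\<forall>u\<in>Ar C. \<forall>v\<in>Ar C. cod C u = dom C v \<longrightarrow> comp C v u \<in> hom C (dom C u) (cod C v)) \<and>
     (\<forall>u\<in>Ar C. comp C u (idm C (dom C u)) = u \<and> comp C (idm C (cod C u)) u = u) \<and>
     (\<forall>u\<in>Ar C. \<forall>v\<in>Ar C. \<forall>w\<in>Ar C. cod C u = dom C v \<longrightarrow> cod C v = dom C w \<longrightarrow>
        comp C w (comp C v u) = comp C (comp C w v) u)"

definition iso :: "('o, 'm) cylcat \<Rightarrow> 'm \<Rightarrow> bool" where
  "iso C u \<longleftrightarrow> u \<in> Ar C \<and> (\<exists>v\<in>hom C (cod C u) (dom C u).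
      comp C v u = idm C (dom C u) \<and> comp C u v = idm C (cod C u))"

definition initial :: "('o, 'm) cylcat \<Rightarrow> 'o \<Rightarrow> bool" where
  "initial C z \<longleftrightarrow> z \<in> Ob C \<and> (\<forall>c\<in>Ob C. \<exists>!u. u \<in> hom C z c)"

text \<open>is_pushout C i g j k: the square with i : A \<rightarrow> B, g : A \<rightarrow> C', j : B \<rightarrow> D,
  k : C' \<rightarrow> D (so j o i = k o g) is a pushout; k is the pushout of i along g.\<close>

definition is_pushout :: "('o, 'm) cylcat \<Rightarrow> 'm \<Rightarrow> 'm \<Rightarrow> 'm \<Rightarrow> 'm \<Rightarrow> bool" where
  "is_pushout C i g j k \<longleftrightarrow>
     i \<in> Ar C \<and> g \<in> Ar C \<and> j \<in> Ar C \<and> k \<in> Ar C \<and>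
     dom C i = dom C g \<and> dom C j = cod C i \<and> dom C k = cod C g \<and> cod C j = cod C k \<and>
     comp C j i = comp C k g \<and>
     (\<forall>E\<in>Ob C. \<forall>p\<in>hom C (cod C i) E. \<forall>q\<in>hom C (cod C g) E.
        comp C p i = comp C q g \<longrightarrow>
        (\<exists>!r. r \<in> hom C (cod C j) E \<and> comp C r j = p \<and> comp C r k = q))"

definition is_coproduct :: "('o, 'm) cylcat \<Rightarrow> 'o \<Rightarrow> 'o \<Rightarrow> 'm \<Rightarrow> 'm \<Rightarrow> bool" where
  "is_coproduct C a b in0 in1 \<longleftrightarrow>
     in0 \<in> Ar C \<and> in1 \<in> Ar C \<and> dom C in0 = a \<and> dom C in1 = b \<and> cod C in0 = cod C in1 \<and>
     (\<forall>E\<in>Ob C. \<forall>p\<in>hom C a E. \<forall>q\<in>hom C b E.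
        (\<exists>!r. r \<in> hom C (cod C in0) E \<and> comp C r in0 = p \<and> comp C r in1 = q))"

definition cylinder_category :: "('o, 'm) cylcat \<Rightarrow> bool" where
  "cylinder_category C \<longleftrightarrow>
     category C \<and> cof C \<subseteq> Ar C \<and> we C \<subseteq> Ar C \<and>
     \<comment> \<open>(1)\<close>
     (\<forall>u. iso C u \<longrightarrow> u \<in> cof C \<and> u \<in> we C) \<and>
     (\<forall>u\<in>cof C. \<forall>v\<in>cof C. cod C u = dom C v \<longrightarrow> comp C v u \<in> cof C) \<and>
     (\<forall>u\<in>we C. \<forall>v\<in>we C. cod C u = dom C v \<longrightarrow> comp C v u \<in> we C) \<and>
     \<comment> \<open>(2) 2-out-of-6 for h : a \<rightarrow> b, g : b \<rightarrow> c, f : c \<rightarrow> d\<close>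
     (\<forall>f\<in>Ar C. \<forall>g\<in>Ar C. \<forall>h\<in>Ar C. cod C h = dom C g \<longrightarrow> cod C g = dom C f \<longrightarrow>
        comp C f g \<in> we C \<longrightarrow> comp C g h \<in> we C \<longrightarrow>
        f \<in> we C \<and> g \<in> we C \<and> h \<in> we C \<and> comp C f (comp C g h) \<in> we C) \<and>
     \<comment> \<open>(3)\<close>
     (\<exists>z. initial C z) \<and>
     (\<forall>z c u. initial C z \<longrightarrow> u \<in> hom C z c \<longrightarrow> u \<in> cof C) \<and>
     \<comment> \<open>(4)\<close>
     (\<forall>i\<in>cof C. \<forall>g\<in>Ar C. dom C g = dom C i \<longrightarrow>
        (\<exists>j k. is_pushout C i g j k) \<and> (\<forall>j k. is_pushout C i g j k \<longrightarrow> k \<in> cof C)) \<and>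
     \<comment> \<open>(5)\<close>
     (\<forall>i\<in>cof C \<inter> we C. \<forall>g j k. is_pushout C i g j k \<longrightarrow> k \<in> cof C \<inter> we C) \<and>
     \<comment> \<open>(6) codiagonal of a coproduct X \<squnion> X factors as cofibration then weak equivalence\<close>
     (\<forall>a\<in>Ob C. \<exists>in0 in1 k p. is_coproduct C a a in0 in1 \<and>
        k \<in> cof C \<and> dom C k = cod C in0 \<and> p \<in> we C \<and> p \<in> hom C (cod C k) a \<and>
        comp C p (comp C k in0) = idm C a \<and> comp C p (comp C k in1) = idm C a) \<and>
     \<comment> \<open>(7)\<close>
     (\<forall>u\<in>cof C \<inter> we C. \<exists>r\<in>hom C (cod C u) (dom C u). comp C r u = idm C (dom C u))"

text \<open>Relative cylinder object for a cofibration i : A \<rightarrow> B: a pushout B \<squnion>_A B (legs in0, in1),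
  a cofibration k : B \<squnion>_A B \<rightarrow> I and a weak equivalence p : I \<rightarrow> B with p o k the codiagonal.
  The two inclusions B \<rightarrow> I are k o in0 and k o in1.\<close>

definition rel_cylinder :: "('o, 'm) cylcat \<Rightarrow> 'm \<Rightarrow> 'm \<Rightarrow> 'm \<Rightarrow> 'm \<Rightarrow> 'm \<Rightarrow> bool" where
  "rel_cylinder C i in0 in1 k p \<longleftrightarrow>
     i \<in> cof C \<and> is_pushout C i i in0 in1 \<and> k \<in> cof C \<and> dom C k = cod C in0 \<and>
     p \<in> we C \<and> p \<in> hom C (cod C k) (cod C i) \<and>
     comp C p (comp C k in0) = idm C (cod C i) \<and> comp C p (comp C k in1) = idm C (cod C i)"

text \<open>A presheaf is given by its sets Xo c and restriction maps Xm u : Xo (cod u) \<rightarrow> Xo (dom u).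
  By Yoneda, a map from (the image of) an object c to X is an element of Xo c, and
  precomposition with u corresponds to Xm u.\<close>

definition is_presheaf :: "('o, 'm) cylcat \<Rightarrow> ('o \<Rightarrow> 'x set) \<Rightarrow> ('m \<Rightarrow> 'x \<Rightarrow> 'x) \<Rightarrow> bool" where
  "is_presheaf C Xo Xm \<longleftrightarrow>
     (\<forall>u\<in>Ar C. Xm u ` Xo (cod C u) \<subseteq> Xo (dom C u)) \<and>
     (\<forall>a\<in>Ob C. \<forall>x\<in>Xo a. Xm (idm C a) x = x) \<and>
     (\<forall>u\<in>Ar C. \<forall>v\<in>Ar C. cod C u = dom C v \<longrightarrow>
        (\<forall>x\<in>Xo (cod C v). Xm (comp C v u) x = Xm u (Xm v x))) \<and>
     (\<forall>z. initial C z \<longrightarrow> (\<exists>x. Xo z = {x})) \<and>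
     (\<forall>i g j k. i \<in> cof C \<longrightarrow> is_pushout C i g j k \<longrightarrow>
        bij_betw (\<lambda>d. (Xm j d, Xm k d)) (Xo (cod C j))
          {(b, c). b \<in> Xo (cod C i) \<and> c \<in> Xo (cod C g) \<and> Xm i b = Xm g c})"

definition psh_mor :: "('o, 'm) cylcat \<Rightarrow> ('o \<Rightarrow> 'x set) \<Rightarrow> ('m \<Rightarrow> 'x \<Rightarrow> 'x)
    \<Rightarrow> ('o \<Rightarrow> 'y set) \<Rightarrow> ('m \<Rightarrow> 'y \<Rightarrow> 'y) \<Rightarrow> ('o \<Rightarrow> 'x \<Rightarrow> 'y) \<Rightarrow> bool" where
  "psh_mor C Xo Xm Yo Ym f \<longleftrightarrow>
     (\<forall>a\<in>Ob C. f a ` Xo a \<subseteq> Yo a) \<and>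
     (\<forall>u\<in>Ar C. \<forall>x\<in>Xo (cod C u). f (dom C u) (Xm u x) = Ym u (f (cod C u) x))"

definition psh_weq :: "('o, 'm) cylcat \<Rightarrow> ('o \<Rightarrow> 'x set) \<Rightarrow> ('m \<Rightarrow> 'x \<Rightarrow> 'x)
    \<Rightarrow> ('o \<Rightarrow> 'y set) \<Rightarrow> ('m \<Rightarrow> 'y \<Rightarrow> 'y) \<Rightarrow> ('o \<Rightarrow> 'x \<Rightarrow> 'y) \<Rightarrow> bool" where
  "psh_weq C Xo Xm Yo Ym f \<longleftrightarrow>
     (\<forall>i\<in>cof C. \<forall>u\<in>Xo (dom C i). \<forall>w\<in>Yo (cod C i). f (dom C i) u = Ym i w \<longrightarrow>
        (\<exists>a\<in>Xo (cod C i). Xm i a = u \<and>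
          (\<exists>in0 in1 k p h. rel_cylinder C i in0 in1 k p \<and> h \<in> Yo (cod C k) \<and>
             Ym (comp C k in0) h = f (cod C i) a \<and> Ym (comp C k in1) h = w)))"

definition rel_homotopic :: "('o, 'm) cylcat \<Rightarrow> ('o \<Rightarrow> 'x set) \<Rightarrow> ('m \<Rightarrow> 'x \<Rightarrow> 'x)
    \<Rightarrow> 'm \<Rightarrow> 'x \<Rightarrow> 'x \<Rightarrow> bool" where
  "rel_homotopic C Xo Xm i g g' \<longleftrightarrow>
     (\<exists>in0 in1 k p h. rel_cylinder C i in0 in1 k p \<and> h \<in> Xo (cod C k) \<and>
        Xm (comp C k in0) h = g \<and> Xm (comp C k in1) h = g')"

definition pi_fib :: "('o, 'm) cylcat \<Rightarrow> ('o \<Rightarrow> 'x set) \<Rightarrow> ('m \<Rightarrow> 'x \<Rightarrow> 'x) \<Rightarrow> 'm \<Rightarrow> 'x \<Rightarrow> 'x set" where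
  "pi_fib C Xo Xm i x = {g \<in> Xo (cod C i). Xm i g = x}"

definition pi_rel :: "('o, 'm) cylcat \<Rightarrow> ('o \<Rightarrow> 'x set) \<Rightarrow> ('m \<Rightarrow> 'x \<Rightarrow> 'x) \<Rightarrow> 'm \<Rightarrow> 'x \<Rightarrow> 'x rel" where
  "pi_rel C Xo Xm i x = {(g, g'). g \<in> pi_fib C Xo Xm i x \<and> g' \<in> pi_fib C Xo Xm i x \<and>
      rel_homotopic C Xo Xm i g g'}"

definition pi_set :: "('o, 'm) cylcat \<Rightarrow> ('o \<Rightarrow> 'x set) \<Rightarrow> ('m \<Rightarrow> 'x \<Rightarrow> 'x) \<Rightarrow> 'm \<Rightarrow> 'x \<Rightarrow> 'x set set" where
  "pi_set C Xo Xm i x = pi_fib C Xo Xm i x // pi_rel C Xo Xm i x"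

text \<open>\<pi>_{B/A}(f,x): the class [g] is sent to the class of f o g (computed as the
  saturation of the image of [g]).\<close>
definition pi_map :: "('o, 'm) cylcat \<Rightarrow> ('o \<Rightarrow> 'y set) \<Rightarrow> ('m \<Rightarrow> 'y \<Rightarrow> 'y)
    \<Rightarrow> ('o \<Rightarrow> 'x \<Rightarrow> 'y) \<Rightarrow> 'm \<Rightarrow> 'x \<Rightarrow> 'x set \<Rightarrow> 'y set" where
  "pi_map C Yo Ym f i x S = pi_rel C Yo Ym i (f (dom C i) x) `` (f (cod C i) ` S)"

end

theory Submission
  imports Defs
begin

text \<open>
  The class of \<open>f \<circ> g\<close> in \<open>\<pi>\<^sub>B\<^sub>/\<^sub>A(X', f \<circ> x)\<close> depends only on the class of \<open>g\<close>, and
  surjectivity of all the maps \<open>\<pi>\<^sub>B\<^sub>/\<^sub>A(f, x)\<close> unfolds to exactly the lifting condition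
  defining weak equivalences of presheaves. Surjectivity also gives injectivity: if \<open>f \<circ> g\<^sub>1\<close>
  and \<open>f \<circ> g\<^sub>2\<close> are homotopic through \<open>h : I\<^sub>AB \<rightarrow> X'\<close>, then \<open>g\<^sub>1, g\<^sub>2\<close> glue to
  \<open>y : B \<squnion>\<^sub>A B \<rightarrow> X\<close> with \<open>f \<circ> y\<close> the restriction of \<open>h\<close>, and the lifting condition for the
  cofibration \<open>B \<squnion>\<^sub>A B \<rightarrow> I\<^sub>AB\<close> turns \<open>h\<close> into a homotopy between \<open>g\<^sub>1\<close> and \<open>g\<^sub>2\<close>.

  That relative homotopy is an equivalence relation needs relative cylinders for every
  cofibration and a way to compose them. Both come from factoring an arbitrary map as a
  cofibration followed by a weak equivalence, which the mapping cylinder provides.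
\<close>

section \<open>Cylinder categories\<close>

locale cylinder_cat =
  fixes C :: "('o, 'm) cylcat"
  assumes cylinder_category: "cylinder_category C"
begin

lemma category: "category C"
  using cylinder_category unfolding cylinder_category_def by (elim conjE)

lemma hom_iff: "u \<in> hom C a b \<longleftrightarrow> u \<in> Ar C \<and> dom C u = a \<and> cod C u = b"
  unfolding hom_def by blast

lemma dom_cod_Ob: "u \<in> Ar C \<Longrightarrow> dom C u \<in> Ob C \<and> cod C u \<in> Ob C"
  using category unfolding category_def by blast

lemma idm_Ar [simp]: "a \<in> Ob C \<Longrightarrow> idm C a \<in> Ar C"
  and idm_dom [simp]: "a \<in> Ob C \<Longrightarrow> dom C (idm C a) = a"
  and idm_cod [simp]: "a \<in> Ob C \<Longrightarrow> cod C (idm C a) = a"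
  using category unfolding category_def hom_def by blast+

lemma comp_Ar [simp]: "u \<in> Ar C \<Longrightarrow> v \<in> Ar C \<Longrightarrow> cod C u = dom C v \<Longrightarrow> comp C v u \<in> Ar C"
  and comp_dom [simp]: "u \<in> Ar C \<Longrightarrow> v \<in> Ar C \<Longrightarrow> cod C u = dom C v \<Longrightarrow> dom C (comp C v u) = dom C u"
  and comp_cod [simp]: "u \<in> Ar C \<Longrightarrow> v \<in> Ar C \<Longrightarrow> cod C u = dom C v \<Longrightarrow> cod C (comp C v u) = cod C v"
  using category unfolding category_def hom_def by blast+

lemma comp_idm_right [simp]: "u \<in> Ar C \<Longrightarrow> comp C u (idm C (dom C u)) = u"
  and comp_idm_left [simp]: "u \<in> Ar C \<Longrightarrow> comp C (idm C (cod C u)) u = u"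
  using category unfolding category_def by blast+

lemma comp_assoc:
  "\<lbrakk>u \<in> Ar C; v \<in> Ar C; w \<in> Ar C; cod C u = dom C v; cod C v = dom C w\<rbrakk>
   \<Longrightarrow> comp C (comp C w v) u = comp C w (comp C v u)"
  using category unfolding category_def by simp

lemma comp_assoc_hom:
  "u \<in> hom C a b \<Longrightarrow> v \<in> hom C b c \<Longrightarrow> w \<in> hom C c d \<Longrightarrow>
   comp C (comp C w v) u = comp C w (comp C v u)"
  by (simp add: hom_iff comp_assoc)

lemma idm_comp_idm [simp]: "a \<in> Ob C \<Longrightarrow> comp C (idm C a) (idm C a) = idm C a"
  using comp_idm_left[of "idm C a"] by simp

lemma comp_hom: "u \<in> hom C a b \<Longrightarrow> v \<in> hom C b c \<Longrightarrow> comp C v u \<in> hom C a c"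
  by (simp add: hom_iff)

lemma cof_subset: "cof C \<subseteq> Ar C"
  and we_subset: "we C \<subseteq> Ar C"
  and iso_trivial_cof: "\<forall>u. iso C u \<longrightarrow> u \<in> cof C \<and> u \<in> we C"
  and cof_comp_closed: "\<forall>u\<in>cof C. \<forall>v\<in>cof C. cod C u = dom C v \<longrightarrow> comp C v u \<in> cof C"
  and we_comp_closed: "\<forall>u\<in>we C. \<forall>v\<in>we C. cod C u = dom C v \<longrightarrow> comp C v u \<in> we C"
  and we_two_of_six_ax: "\<forall>f\<in>Ar C. \<forall>g\<in>Ar C. \<forall>h\<in>Ar C. cod C h = dom C g \<longrightarrow> cod C g = dom C f \<longrightarrow>
        comp C f g \<in> we C \<longrightarrow> comp C g h \<in> we C \<longrightarrow>
        f \<in> we C \<and> g \<in> we C \<and> h \<in> we C \<and> comp C f (comp C g h) \<in> we C"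
  and initial_ex: "\<exists>z. initial C z"
  and initial_hom_cof_ax: "\<forall>z c u. initial C z \<longrightarrow> u \<in> hom C z c \<longrightarrow> u \<in> cof C"
  and pushout_ax: "\<forall>i\<in>cof C. \<forall>g\<in>Ar C. dom C g = dom C i \<longrightarrow>
        (\<exists>j k. is_pushout C i g j k) \<and> (\<forall>j k. is_pushout C i g j k \<longrightarrow> k \<in> cof C)"
  and pushout_trivial_cof_ax: "\<forall>i\<in>cof C \<inter> we C. \<forall>g j k. is_pushout C i g j k \<longrightarrow> k \<in> cof C \<inter> we C"
  and cylinder_ax: "\<forall>a\<in>Ob C. \<exists>in0 in1 k p. is_coproduct C a a in0 in1 \<and>
        k \<in> cof C \<and> dom C k = cod C in0 \<and> p \<in> we C \<and> p \<in> hom C (cod C k) a \<and>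
        comp C p (comp C k in0) = idm C a \<and> comp C p (comp C k in1) = idm C a"
  by (insert cylinder_category, unfold cylinder_category_def, (elim conjE, assumption)+)

lemma cof_Ar: "u \<in> cof C \<Longrightarrow> u \<in> Ar C"
  and we_Ar: "u \<in> we C \<Longrightarrow> u \<in> Ar C"
  using cof_subset we_subset by blast+

lemma idm_we: "a \<in> Ob C \<Longrightarrow> idm C a \<in> we C"
proof -
  assume "a \<in> Ob C"
  then have "iso C (idm C a)"
    unfolding iso_def by (auto simp: hom_iff intro!: bexI[of _ "idm C a"])
  then show ?thesis
    using iso_trivial_cof by blast
qed

lemma cof_comp: "u \<in> cof C \<Longrightarrow> v \<in> cof C \<Longrightarrow> cod C u = dom C v \<Longrightarrow> comp C v u \<in> cof C"
  using cof_comp_closed by blast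

lemma we_comp: "u \<in> we C \<Longrightarrow> v \<in> we C \<Longrightarrow> cod C u = dom C v \<Longrightarrow> comp C v u \<in> we C"
  using we_comp_closed by blast

lemma we_two_of_six:
  "\<lbrakk>f \<in> Ar C; g \<in> Ar C; h \<in> Ar C; cod C h = dom C g; cod C g = dom C f;
    comp C f g \<in> we C; comp C g h \<in> we C\<rbrakk> \<Longrightarrow> f \<in> we C \<and> g \<in> we C \<and> h \<in> we C"
  using we_two_of_six_ax by blast

lemma we_cancel_left:
  "\<lbrakk>f \<in> Ar C; g \<in> we C; cod C g = dom C f; comp C f g \<in> we C\<rbrakk> \<Longrightarrow> f \<in> we C"
  using we_two_of_six[of f g "idm C (dom C g)"] we_Ar[of g] dom_cod_Ob[of g] by simp

lemma we_cancel_right: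
  "\<lbrakk>f \<in> we C; g \<in> Ar C; cod C g = dom C f; comp C f g \<in> we C\<rbrakk> \<Longrightarrow> g \<in> we C"
  using we_two_of_six[of "idm C (cod C f)" f g] we_Ar[of f] dom_cod_Ob[of f] by simp

lemma initial_hom_cof: "initial C z \<Longrightarrow> u \<in> hom C z c \<Longrightarrow> u \<in> cof C"
  using initial_hom_cof_ax by blast

lemma initial_hom_ex: "initial C z \<Longrightarrow> c \<in> Ob C \<Longrightarrow> \<exists>u. u \<in> hom C z c"
  unfolding initial_def by blast

lemma initial_hom_unique: "initial C z \<Longrightarrow> u \<in> hom C z c \<Longrightarrow> v \<in> hom C z c \<Longrightarrow> u = v"
  unfolding initial_def hom_iff using dom_cod_Ob by blast

lemma pushout_ex: "i \<in> cof C \<Longrightarrow> g \<in> Ar C \<Longrightarrow> dom C g = dom C i \<Longrightarrow> \<exists>j k. is_pushout C i g j k"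
  using pushout_ax by blast

lemma pushout_cof:
  assumes "i \<in> cof C" and "is_pushout C i g j k"
  shows "k \<in> cof C"
proof -
  have "g \<in> Ar C" "dom C g = dom C i"
    using assms(2) unfolding is_pushout_def by simp_all
  then show ?thesis
    using pushout_ax assms by blast
qed

lemma pushout_trivial_cof: "i \<in> cof C \<Longrightarrow> i \<in> we C \<Longrightarrow> is_pushout C i g j k \<Longrightarrow> k \<in> cof C \<and> k \<in> we C"
  using pushout_trivial_cof_ax by blast

section \<open>Pushouts\<close>

lemma hom_Ob: "u \<in> hom C a b \<Longrightarrow> a \<in> Ob C \<and> b \<in> Ob C"
  using dom_cod_Ob by (auto simp: hom_iff)

lemma pushoutD:
  assumes "is_pushout C i g j k"
  shows "i \<in> Ar C" "g \<in> Ar C" "j \<in> Ar C" "k \<in> Ar C" "dom C i = dom C g"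
    "dom C j = cod C i" "dom C k = cod C g" "cod C j = cod C k" "comp C j i = comp C k g"
  using assms unfolding is_pushout_def by simp_all

lemma pushout_universal:
  assumes "is_pushout C i g j k" "p \<in> hom C (cod C i) E" "q \<in> hom C (cod C g) E"
    "comp C p i = comp C q g"
  shows "\<exists>!r. r \<in> hom C (cod C j) E \<and> comp C r j = p \<and> comp C r k = q"
proof -
  have "E \<in> Ob C"
    using hom_Ob[OF assms(2)] by simp
  with assms show ?thesis
    unfolding is_pushout_def by (elim conjE) blast
qed

lemma pushout_induced:
  assumes "is_pushout C i g j k" "p \<in> hom C (cod C i) E" "q \<in> hom C (cod C g) E"
    "comp C p i = comp C q g"
  shows "\<exists>r\<in>hom C (cod C j) E. comp C r j = p \<and> comp C r k = q"
  using pushout_universal[OF assms] by blast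

lemma pushout_maps_eq:
  assumes po: "is_pushout C i g j k" and r: "r \<in> hom C (cod C j) E" "r' \<in> hom C (cod C j) E"
    and eq: "comp C r j = comp C r' j" "comp C r k = comp C r' k"
  shows "r = r'"
proof -
  note d = pushoutD[OF po]
  have "comp C (comp C r j) i = comp C (comp C r k) g"
    using d r by (simp add: comp_assoc hom_iff)
  moreover have "comp C r j \<in> hom C (cod C i) E" "comp C r k \<in> hom C (cod C g) E"
    using d r by (auto simp: hom_iff)
  ultimately have "\<exists>!s. s \<in> hom C (cod C j) E \<and> comp C s j = comp C r j \<and> comp C s k = comp C r k"
    using pushout_universal[OF po] by blast
  then show ?thesis
    using r eq by (metis (no_types, lifting))
qed

lemma is_pushoutI:
  assumes "i \<in> Ar C" "g \<in> Ar C" "j \<in> Ar C" "k \<in> Ar C" "dom C i = dom C g"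
    "dom C j = cod C i" "dom C k = cod C g" "cod C j = cod C k" "comp C j i = comp C k g"
    and induced: "\<And>E p q. p \<in> hom C (cod C i) E \<Longrightarrow> q \<in> hom C (cod C g) E \<Longrightarrow>
      comp C p i = comp C q g \<Longrightarrow> \<exists>r\<in>hom C (cod C j) E. comp C r j = p \<and> comp C r k = q"
    and unique: "\<And>E r r'. r \<in> hom C (cod C j) E \<Longrightarrow> r' \<in> hom C (cod C j) E \<Longrightarrow>
      comp C r j = comp C r' j \<Longrightarrow> comp C r k = comp C r' k \<Longrightarrow> r = r'"
  shows "is_pushout C i g j k"
proof -
  have ex1: "\<exists>!r. r \<in> hom C (cod C j) E \<and> comp C r j = p \<and> comp C r k = q"
    if pq: "p \<in> hom C (cod C i) E" "q \<in> hom C (cod C g) E" "comp C p i = comp C q g" for E p q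
  proof -
    obtain r where r: "r \<in> hom C (cod C j) E" "comp C r j = p" "comp C r k = q"
      using induced[OF pq] by blast
    show ?thesis
    proof (rule ex1I[of _ r])
      show "r' = r" if "r' \<in> hom C (cod C j) E \<and> comp C r' j = p \<and> comp C r' k = q" for r'
        using that by (elim conjE) (rule unique[OF _ r(1)], simp_all add: r)
    qed (use r in blast)
  qed
  show ?thesis
    unfolding is_pushout_def by (intro conjI ballI impI assms(1-9) ex1; assumption)
qed

lemma pushout_sym:
  assumes po: "is_pushout C i g j k"
  shows "is_pushout C g i k j"
proof (rule is_pushoutI)
  note d = pushoutD[OF po]
  show "g \<in> Ar C" "i \<in> Ar C" "k \<in> Ar C" "j \<in> Ar C" "dom C g = dom C i" "dom C k = cod C g"
    "dom C j = cod C i" "cod C k = cod C j" "comp C k g = comp C j i"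
    using d by simp_all
  show "\<exists>r\<in>hom C (cod C k) E. comp C r k = p \<and> comp C r j = q"
    if "p \<in> hom C (cod C g) E" "q \<in> hom C (cod C i) E" "comp C p g = comp C q i" for E p q
    using pushout_induced[OF po that(2,1) that(3)[symmetric]] d(8) by auto
  show "r = r'" if "r \<in> hom C (cod C k) E" "r' \<in> hom C (cod C k) E"
    "comp C r k = comp C r' k" "comp C r j = comp C r' j" for E r r'
    using pushout_maps_eq[OF po] that d(8) by simp
qed

lemma coproduct_initial_pushout:
  assumes cp: "is_coproduct C a b in0 in1"
    and z: "initial C z" "za \<in> hom C z a" "zb \<in> hom C z b"
  shows "is_pushout C za zb in0 in1"
proof -
  have d: "in0 \<in> Ar C" "in1 \<in> Ar C" "dom C in0 = a" "dom C in1 = b" "cod C in0 = cod C in1"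
    using cp unfolding is_coproduct_def by simp_all
  have univ: "\<exists>!r. r \<in> hom C (cod C in0) E \<and> comp C r in0 = p \<and> comp C r in1 = q"
    if "p \<in> hom C a E" "q \<in> hom C b E" for E p q
    using cp hom_Ob[OF that(1)] that unfolding is_coproduct_def by (elim conjE) blast
  show ?thesis
  proof (rule is_pushoutI)
    show "comp C in0 za = comp C in1 zb"
      using initial_hom_unique[OF z(1)] z d by (simp add: hom_iff)
    show "\<exists>r\<in>hom C (cod C in0) E. comp C r in0 = p \<and> comp C r in1 = q"
      if "p \<in> hom C (cod C za) E" "q \<in> hom C (cod C zb) E" for E p q
    proof -
      have "p \<in> hom C a E" "q \<in> hom C b E"
        using that z by (simp_all add: hom_iff)
      then show ?thesis
        using univ by blast
    qed
    show "r = r'" if r: "r \<in> hom C (cod C in0) E" "r' \<in> hom C (cod C in0) E"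
      and "comp C r in0 = comp C r' in0" "comp C r in1 = comp C r' in1" for E r r'
    proof -
      have "comp C r in0 \<in> hom C a E" "comp C r in1 \<in> hom C b E"
        using r d by (auto simp: hom_iff)
      then have "\<exists>!s. s \<in> hom C (cod C in0) E \<and> comp C s in0 = comp C r in0 \<and> comp C s in1 = comp C r in1"
        by (rule univ)
      then show ?thesis
        using r that(3,4) by (metis (no_types, lifting))
    qed
  qed (use z d in \<open>auto simp: hom_iff\<close>)
qed

lemma pushout_paste_cancel:
  assumes left: "is_pushout C i1 g v d" and outer: "is_pushout C (comp C i2 i1) g j k"
    and i2: "i2 \<in> Ar C" "dom C i2 = cod C i1"
    and w: "w \<in> hom C (cod C v) (cod C j)" "comp C j i2 = comp C w v" "comp C w d = k"
  shows "is_pushout C i2 v j w"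
proof -
  note l = pushoutD[OF left] and o = pushoutD[OF outer]
  have wA: "w \<in> Ar C" "dom C w = cod C d" "cod C w = cod C j"
    using w(1) l by (simp_all add: hom_iff)
  have jA: "dom C j = cod C i2"
    using o i2 l by simp
  show ?thesis
  proof (rule is_pushoutI)
    show "\<exists>r\<in>hom C (cod C j) E. comp C r j = p \<and> comp C r w = q"
      if p: "p \<in> hom C (cod C i2) E" and q: "q \<in> hom C (cod C v) E" and pq: "comp C p i2 = comp C q v"
      for E p q
    proof -
      have "comp C p (comp C i2 i1) = comp C (comp C p i2) i1"
        using p l i2 by (simp add: hom_iff comp_assoc)
      also have "\<dots> = comp C q (comp C v i1)"
        using pq q l by (simp add: hom_iff comp_assoc)
      also have "\<dots> = comp C (comp C q d) g"
        using q l by (simp add: hom_iff comp_assoc)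
      finally have "comp C p (comp C i2 i1) = comp C (comp C q d) g" .
      moreover have "p \<in> hom C (cod C (comp C i2 i1)) E" "comp C q d \<in> hom C (cod C g) E"
        using p q l i2 by (auto simp: hom_iff)
      ultimately obtain r where r: "r \<in> hom C (cod C j) E" "comp C r j = p" "comp C r k = comp C q d"
        using pushout_induced[OF outer] by blast
      have rA: "r \<in> Ar C" "dom C r = cod C j"
        using r(1) by (simp_all add: hom_iff)
      have "comp C r w = q"
      proof (rule pushout_maps_eq[OF left])
        show "comp C r w \<in> hom C (cod C v) E"
          using comp_hom[OF w(1) r(1)] .
        show "q \<in> hom C (cod C v) E" by (fact q)
        have "comp C (comp C r w) v = comp C r (comp C j i2)"
          using rA wA l by (simp add: comp_assoc w(2))
        also have "\<dots> = comp C q v"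
          using rA i2 jA o by (simp add: comp_assoc[symmetric] r(2) pq)
        finally show "comp C (comp C r w) v = comp C q v" .
        show "comp C (comp C r w) d = comp C q d"
          using rA wA l by (simp add: comp_assoc w(3) r(3))
      qed
      then show ?thesis
        using r by blast
    qed
    show "r = r'" if r: "r \<in> hom C (cod C j) E" "r' \<in> hom C (cod C j) E"
      and eq: "comp C r j = comp C r' j" "comp C r w = comp C r' w" for E r r'
    proof (rule pushout_maps_eq[OF outer r eq(1)])
      have "comp C r k = comp C (comp C r w) d" and "comp C r' k = comp C (comp C r' w) d"
        using r wA l by (simp_all add: hom_iff comp_assoc w(3))
      then show "comp C r k = comp C r' k"
        using eq(2) by simp
    qed
  qed (use l o i2 wA w(2) in simp_all)
qed

section \<open>Relative cylinders and the mapping cylinder\<close>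

lemma rel_cylinderD:
  assumes "rel_cylinder C i in0 in1 k p"
  shows "i \<in> cof C" "is_pushout C i i in0 in1" "k \<in> cof C" "dom C k = cod C in0" "p \<in> we C"
    "p \<in> hom C (cod C k) (cod C i)" "comp C p (comp C k in0) = idm C (cod C i)"
    "comp C p (comp C k in1) = idm C (cod C i)"
  using assms unfolding rel_cylinder_def by simp_all

lemma rel_cylinder_swap:
  assumes "rel_cylinder C i in0 in1 k p"
  shows "rel_cylinder C i in1 in0 k p"
  using assms pushout_sym[OF rel_cylinderD(2)[OF assms]] pushoutD(8)[OF rel_cylinderD(2)[OF assms]]
  unfolding rel_cylinder_def by simp

lemma rel_cylinder_ends:
  assumes "rel_cylinder C i in0 in1 k p"
  shows "comp C k in0 \<in> hom C (cod C i) (cod C k)" "comp C k in1 \<in> hom C (cod C i) (cod C k)"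
    "comp C (comp C k in0) i = comp C (comp C k in1) i"
proof -
  note c = rel_cylinderD[OF assms] and d = pushoutD[OF rel_cylinderD(2)[OF assms]]
  have k: "k \<in> Ar C"
    using c(3) cof_Ar by blast
  show "comp C k in0 \<in> hom C (cod C i) (cod C k)" "comp C k in1 \<in> hom C (cod C i) (cod C k)"
    using k c(4) d by (simp_all add: hom_iff)
  show "comp C (comp C k in0) i = comp C (comp C k in1) i"
    using k c(4) d by (simp add: comp_assoc)
qed

lemma rel_cylinder_end_trivial_cof:
  assumes "rel_cylinder C i in0 in1 k p"
  shows "comp C k in1 \<in> cof C" "comp C k in1 \<in> we C"
proof -
  note c = rel_cylinderD[OF assms] and d = pushoutD[OF rel_cylinderD(2)[OF assms]]
  have "in1 \<in> cof C"
    using pushout_cof[OF c(1,2)] .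
  then show "comp C k in1 \<in> cof C"
    using cof_comp c(3,4) d(8) by simp
  have "cod C i \<in> Ob C"
    using dom_cod_Ob cof_Ar[OF c(1)] by blast
  then show "comp C k in1 \<in> we C"
    using we_cancel_right[OF c(5)] c(4,6,8) idm_we rel_cylinder_ends(2)[OF assms]
    by (simp add: hom_iff)
qed

lemma absolute_cylinder_ex:
  assumes z: "initial C z" "za \<in> hom C z a"
  shows "\<exists>c0 c1 k p. rel_cylinder C za c0 c1 k p"
proof -
  obtain c0 c1 k p where cyl: "is_coproduct C a a c0 c1" "k \<in> cof C" "dom C k = cod C c0"
    "p \<in> we C" "p \<in> hom C (cod C k) a" "comp C p (comp C k c0) = idm C a" "comp C p (comp C k c1) = idm C a"
    using cylinder_ax hom_Ob[OF z(2)] by blast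
  have "is_pushout C za za c0 c1"
    using coproduct_initial_pushout[OF cyl(1) z(1) z(2) z(2)] .
  then have "rel_cylinder C za c0 c1 k p"
    using cyl initial_hom_cof[OF z] z(2) unfolding rel_cylinder_def by (simp add: hom_iff)
  then show ?thesis
    by blast
qed

lemma pushout_summand_map:
  assumes cpA: "is_pushout C i i c0 c1" and cpB: "is_pushout C i (comp C u i) d0 d1"
    and u: "u \<in> Ar C" "dom C u = cod C i"
  shows "\<exists>v\<in>hom C (cod C c0) (cod C d0). comp C v c0 = d0 \<and> comp C v c1 = comp C d1 u
    \<and> is_pushout C c1 u v d1"
proof -
  note a = pushoutD[OF cpA] and b = pushoutD[OF cpB]
  have "comp C d0 i = comp C (comp C d1 u) i"
    using b u by (simp add: comp_assoc)
  moreover have "d0 \<in> hom C (cod C i) (cod C d0)" "comp C d1 u \<in> hom C (cod C i) (cod C d0)"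
    using b u by (simp_all add: hom_iff)
  ultimately obtain v where v: "v \<in> hom C (cod C c0) (cod C d0)" "comp C v c0 = d0"
    "comp C v c1 = comp C d1 u"
    using pushout_induced[OF cpA] by blast
  have "v \<in> hom C (cod C c1) (cod C d1)"
    using v(1) a(8) b(8) by simp
  then have "is_pushout C u c1 d1 v"
    using pushout_paste_cancel[OF pushout_sym[OF cpA] pushout_sym[OF cpB] u _ v(3)[symmetric] v(2)]
    by blast
  then show ?thesis
    using v pushout_sym by blast
qed

lemma mapping_cylinder_cof:
  assumes cyl: "rel_cylinder C zP c0 c1 kP pP" and z: "initial C z" "zP \<in> hom C z P"
    and u: "u \<in> hom C P J" and po: "is_pushout C (comp C kP c1) u jj b"
  shows "comp C jj (comp C kP c0) \<in> cof C"
proof -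
  note c = rel_cylinderD[OF cyl] and cp = pushoutD[OF rel_cylinderD(2)[OF cyl]]
    and pj = pushoutD[OF po]
  have zP: "zP \<in> Ar C" "cod C zP = P" and uA: "u \<in> Ar C" "dom C u = P" "cod C u = J"
    and kP: "kP \<in> Ar C" "dom C kP = cod C c1"
    using z(2) u c(3,4) cp cof_Ar by (simp_all add: hom_iff)
  have zJ: "comp C u zP \<in> hom C z J"
    using comp_hom z(2) u by blast
  then have zJA: "comp C u zP \<in> Ar C" "dom C (comp C u zP) = dom C zP" "cod C (comp C u zP) = J"
    using z(2) by (simp_all add: hom_iff)
  then obtain d0 d1 where cpJ: "is_pushout C zP (comp C u zP) d0 d1"
    using pushout_ex[OF c(1)] by blast
  note dJ = pushoutD[OF cpJ]
  have d0: "d0 \<in> cof C"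
    using pushout_cof[OF initial_hom_cof[OF z(1) zJ] pushout_sym[OF cpJ]] .
  \<comment> \<open>the square of cylinder and coproduct inclusions is a pushout \<dots>\<close>
  obtain v where v: "v \<in> hom C (cod C c0) (cod C d0)" "comp C v c0 = d0" "comp C v c1 = comp C d1 u"
    and left: "is_pushout C c1 u v d1"
    using pushout_summand_map[OF c(2) cpJ uA(1) uA(2)[folded zP(2)]] by blast
  have jk: "comp C jj (comp C kP c0) \<in> hom C P (cod C jj)" and b: "b \<in> hom C J (cod C jj)"
    using kP pj cp zP uA by (simp_all add: hom_iff)
  have "comp C (comp C jj (comp C kP c0)) zP = comp C b (comp C u zP)"
    using initial_hom_unique[OF z(1) comp_hom[OF z(2) jk] comp_hom[OF zJ b]] .
  then obtain w where w: "w \<in> hom C (cod C d0) (cod C jj)"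
    "comp C w d0 = comp C jj (comp C kP c0)" "comp C w d1 = b"
    using pushout_induced[OF cpJ jk[folded zP(2)] b[folded zJA(3)]] by blast
  have vA: "v \<in> Ar C" "dom C v = cod C c1" "cod C v = cod C d1" and wA: "w \<in> Ar C" "dom C w = cod C v"
    using v w cp dJ by (simp_all add: hom_iff)
  have comm: "comp C jj kP = comp C w v"
  proof (rule pushout_maps_eq[OF c(2)])
    show "comp C jj kP \<in> hom C (cod C c0) (cod C jj)" "comp C w v \<in> hom C (cod C c0) (cod C jj)"
      using kP pj cp vA wA w(1) by (simp_all add: hom_iff)
    show "comp C (comp C jj kP) c0 = comp C (comp C w v) c0"
      using kP pj cp vA wA by (simp add: comp_assoc v(2) w(2))
    have "comp C (comp C jj kP) c1 = comp C b u"
      using kP pj cp by (simp add: comp_assoc)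
    also have "\<dots> = comp C (comp C w v) c1"
      using uA zP dJ vA wA cp by (simp add: comp_assoc v(3) flip: w(3))
    finally show "comp C (comp C jj kP) c1 = comp C (comp C w v) c1" .
  qed
  \<comment> \<open>\<dots> so pasting exhibits \<open>w\<close> as a pushout of the cofibration \<open>kP\<close>\<close>
  have "w \<in> hom C (cod C v) (cod C jj)"
    using w(1) vA dJ(8) by simp
  then have "is_pushout C kP v jj w"
    using pushout_paste_cancel[OF left po kP _ comm w(3)] by blast
  then have "comp C w d0 \<in> cof C"
    using cof_comp[OF d0] pushout_cof[OF c(3)] wA vA dJ(8) by simp
  then show ?thesis
    using w(2) by simp
qed

text \<open>The mapping cylinder of \<open>u : P \<rightarrow> J\<close> is the pushout \<open>M\<close> of an end inclusion of the
  cylinder on \<open>P\<close> along \<open>u\<close>; the projection \<open>M \<rightarrow> J\<close> is a weak equivalence because it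
  retracts the trivial cofibration \<open>J \<rightarrow> M\<close>.\<close>

lemma cof_we_factorization:
  assumes u: "u \<in> Ar C"
  shows "\<exists>k r. k \<in> cof C \<and> dom C k = dom C u \<and> r \<in> we C \<and> r \<in> hom C (cod C k) (cod C u)
    \<and> comp C r k = u"
proof -
  obtain z where z: "initial C z"
    using initial_ex by blast
  obtain zP where zP: "zP \<in> hom C z (dom C u)"
    using initial_hom_ex[OF z] dom_cod_Ob[OF u] by blast
  obtain c0 c1 kP pP where cyl: "rel_cylinder C zP c0 c1 kP pP"
    using absolute_cylinder_ex[OF z zP] by blast
  note c = rel_cylinderD[OF cyl] and cp = pushoutD[OF rel_cylinderD(2)[OF cyl]]
  have kP: "kP \<in> Ar C" "dom C kP = cod C c0" and pP: "pP \<in> Ar C" "dom C pP = cod C kP"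
    "cod C pP = dom C u"
    using c(3,4,5,6) cof_Ar we_Ar zP by (simp_all add: hom_iff)
  have j1: "comp C kP c1 \<in> cof C" "comp C kP c1 \<in> we C"
    using rel_cylinder_end_trivial_cof[OF cyl] by simp_all
  obtain jj b where po: "is_pushout C (comp C kP c1) u jj b"
    using pushout_ex[OF j1(1) u] kP cp zP by (auto simp: hom_iff)
  note pj = pushoutD[OF po]
  have b: "b \<in> cof C" "b \<in> we C"
    using pushout_trivial_cof[OF j1 po] by simp_all
  have "comp C (comp C u pP) (comp C kP c1) = comp C (idm C (cod C u)) u"
    using u kP pP cp c(8) zP by (simp add: comp_assoc hom_iff)
  then obtain r where r: "r \<in> hom C (cod C jj) (cod C u)" "comp C r jj = comp C u pP"
    "comp C r b = idm C (cod C u)"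
    using pushout_induced[OF po, of "comp C u pP" "cod C u" "idm C (cod C u)"] u kP pP cp pj
      dom_cod_Ob[OF u] by (auto simp: hom_iff)
  have rA: "r \<in> Ar C" "dom C r = cod C jj" "cod C r = cod C u"
    using r(1) by (simp_all add: hom_iff)
  have "r \<in> we C"
    using we_cancel_left[OF rA(1) b(2)] r(3) pj rA idm_we dom_cod_Ob[OF u] by simp
  moreover have "comp C jj (comp C kP c0) \<in> cof C"
    using mapping_cylinder_cof[OF cyl z zP _ po] u by (simp add: hom_iff)
  moreover have "comp C r (comp C jj (comp C kP c0)) = u"
    using rA pj kP cp pP u c(7) zP by (simp add: comp_assoc[symmetric] r(2)) (simp add: comp_assoc hom_iff)
  ultimately show ?thesis
    using rA pj kP cp by (intro exI[of _ "comp C jj (comp C kP c0)"] exI[of _ r]) (simp add: hom_iff)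
qed

lemma rel_cylinder_through:
  assumes i: "i \<in> cof C" and po: "is_pushout C i i in0 in1"
    and u: "u \<in> hom C (cod C in0) U" and q: "q \<in> we C" "q \<in> hom C U (cod C i)"
    and u0: "comp C q (comp C u in0) = idm C (cod C i)" and u1: "comp C q (comp C u in1) = idm C (cod C i)"
  shows "\<exists>k p r. rel_cylinder C i in0 in1 k p \<and> r \<in> hom C (cod C k) U \<and> comp C r k = u"
proof -
  note d = pushoutD[OF po]
  have uA: "u \<in> Ar C" "dom C u = cod C in0" "cod C u = U" and qA: "q \<in> Ar C" "dom C q = U"
    "cod C q = cod C i"
    using u q by (simp_all add: hom_iff)
  obtain k r where k: "k \<in> cof C" "dom C k = cod C in0" and r: "r \<in> we C" "r \<in> hom C (cod C k) U"
    "comp C r k = u"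
    using cof_we_factorization[OF uA(1)] unfolding uA(2,3) by blast
  have kA: "k \<in> Ar C" and rA: "r \<in> Ar C" "dom C r = cod C k" "cod C r = U"
    using k r cof_Ar by (simp_all add: hom_iff)
  have "comp C (comp C q r) (comp C k in0) = idm C (cod C i)"
    and "comp C (comp C q r) (comp C k in1) = idm C (cod C i)"
    using u0 u1 qA rA kA k d uA by (simp_all add: comp_assoc flip: r(3))
  moreover have "comp C q r \<in> we C" "comp C q r \<in> hom C (cod C k) (cod C i)"
    using we_comp[OF r(1) q(1)] qA rA by (simp_all add: hom_iff)
  ultimately have "rel_cylinder C i in0 in1 k (comp C q r)"
    unfolding rel_cylinder_def using i po k by blast
  then show ?thesis
    using r by blast
qed

lemma rel_cylinder_glue_projection:
  assumes c: "rel_cylinder C i in0 in1 k p" and c': "rel_cylinder C i in0' in1' k' p'"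
    and J: "is_pushout C (comp C k' in0') (comp C k in1) a' a"
  shows "\<exists>q. q \<in> we C \<and> q \<in> hom C (cod C a') (cod C i) \<and> comp C q a' = p' \<and> comp C q a = p"
proof -
  note cd = rel_cylinderD[OF c] and cd' = rel_cylinderD[OF c']
    and e = rel_cylinder_ends[OF c] and e' = rel_cylinder_ends[OF c'] and Jd = pushoutD[OF J]
  have "comp C k' in0' \<in> cof C" "comp C k' in0' \<in> we C"
    using rel_cylinder_end_trivial_cof[OF rel_cylinder_swap[OF c']] by simp_all
  then have a: "a \<in> we C"
    using pushout_trivial_cof[OF _ _ J] by blast
  have "comp C p' (comp C k' in0') = comp C p (comp C k in1)"
    using cd(8) cd'(7) by simp
  moreover have "p' \<in> hom C (cod C (comp C k' in0')) (cod C i)" "p \<in> hom C (cod C (comp C k in1)) (cod C i)"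
    using cd(6) cd'(6) e(2) e'(1) by (simp_all add: hom_iff)
  ultimately obtain q where q: "q \<in> hom C (cod C a') (cod C i)" "comp C q a' = p'" "comp C q a = p"
    using pushout_induced[OF J] by blast
  have "q \<in> we C"
    using we_cancel_left[OF _ a] q Jd e(2) cd(5) by (simp add: hom_iff)
  with q show ?thesis
    by blast
qed

lemma rel_cylinder_compose:
  assumes c: "rel_cylinder C i in0 in1 k p" and c': "rel_cylinder C i in0' in1' k' p'"
    and J: "is_pushout C (comp C k' in0') (comp C k in1) a' a"
  shows "\<exists>u q. u \<in> hom C (cod C in0) (cod C a') \<and> comp C u in0 = comp C a (comp C k in0)
    \<and> comp C u in1 = comp C a' (comp C k' in1') \<and> q \<in> we C \<and> q \<in> hom C (cod C a') (cod C i)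
    \<and> comp C q (comp C u in0) = idm C (cod C i) \<and> comp C q (comp C u in1) = idm C (cod C i)"
proof -
  note cd = rel_cylinderD[OF c] and cd' = rel_cylinderD[OF c']
    and e = rel_cylinder_ends[OF c] and e' = rel_cylinder_ends[OF c']
    and Jd = pushoutD[OF J] and d = pushoutD[OF rel_cylinderD(2)[OF c]]
  obtain q where q: "q \<in> we C" "q \<in> hom C (cod C a') (cod C i)" "comp C q a' = p'" "comp C q a = p"
    using rel_cylinder_glue_projection[OF c c' J] by blast
  have i: "i \<in> hom C (dom C i) (cod C i)" and a: "a \<in> hom C (cod C k) (cod C a')"
    and a': "a' \<in> hom C (cod C k') (cod C a')"
    using Jd e(2) e'(1) d(1) by (simp_all add: hom_iff)
  have "comp C (comp C a (comp C k in0)) i = comp C a (comp C (comp C k in1) i)"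
    using comp_assoc_hom[OF i e(1) a] e(3) by simp
  also have "\<dots> = comp C (comp C a' (comp C k' in0')) i"
    using comp_assoc_hom[OF i e(2) a] Jd(9) by simp
  also have "\<dots> = comp C (comp C a' (comp C k' in1')) i"
    using comp_assoc_hom[OF i e'(1) a'] comp_assoc_hom[OF i e'(2) a'] e'(3) by simp
  finally have "comp C (comp C a (comp C k in0)) i = comp C (comp C a' (comp C k' in1')) i" .
  moreover have "comp C a (comp C k in0) \<in> hom C (cod C i) (cod C a')"
    and "comp C a' (comp C k' in1') \<in> hom C (cod C i) (cod C a')"
    using comp_hom[OF e(1) a] comp_hom[OF e'(2) a'] .
  ultimately obtain u where u: "u \<in> hom C (cod C in0) (cod C a')"
    "comp C u in0 = comp C a (comp C k in0)" "comp C u in1 = comp C a' (comp C k' in1')"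
    using pushout_induced[OF cd(2)] by blast
  have "comp C q (comp C u in0) = idm C (cod C i)" "comp C q (comp C u in1) = idm C (cod C i)"
    using comp_assoc_hom[OF e(1) a q(2)] comp_assoc_hom[OF e'(2) a' q(2)] cd(7) cd'(8)
    by (simp_all add: u(2,3) q(3,4))
  then show ?thesis
    using u q(1,2) by blast
qed

end

section \<open>The relative homotopy relation\<close>

locale presheaf = cylinder_cat +
  fixes Xo :: "'o \<Rightarrow> 'x set" and Xm :: "'m \<Rightarrow> 'x \<Rightarrow> 'x"
  assumes presheaf: "is_presheaf C Xo Xm"
begin

lemma restrict_closed_ax: "\<forall>u\<in>Ar C. Xm u ` Xo (cod C u) \<subseteq> Xo (dom C u)"
  and restrict_idm_ax: "\<forall>a\<in>Ob C. \<forall>x\<in>Xo a. Xm (idm C a) x = x"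
  and restrict_comp_ax: "\<forall>u\<in>Ar C. \<forall>v\<in>Ar C. cod C u = dom C v \<longrightarrow>
        (\<forall>x\<in>Xo (cod C v). Xm (comp C v u) x = Xm u (Xm v x))"
  and restrict_pushout_ax: "\<forall>i g j k. i \<in> cof C \<longrightarrow> is_pushout C i g j k \<longrightarrow>
        bij_betw (\<lambda>d. (Xm j d, Xm k d)) (Xo (cod C j))
          {(b, c). b \<in> Xo (cod C i) \<and> c \<in> Xo (cod C g) \<and> Xm i b = Xm g c}"
  by (insert presheaf, unfold is_presheaf_def, (elim conjE, assumption)+)

lemma restrict_closed: "u \<in> Ar C \<Longrightarrow> x \<in> Xo (cod C u) \<Longrightarrow> Xm u x \<in> Xo (dom C u)"
  using restrict_closed_ax by blast

lemma restrict_idm: "a \<in> Ob C \<Longrightarrow> x \<in> Xo a \<Longrightarrow> Xm (idm C a) x = x"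
  using restrict_idm_ax by blast

lemma restrict_comp:
  "\<lbrakk>u \<in> Ar C; v \<in> Ar C; cod C u = dom C v; x \<in> Xo (cod C v)\<rbrakk> \<Longrightarrow> Xm (comp C v u) x = Xm u (Xm v x)"
  using restrict_comp_ax by blast

lemma restrict_hom: "u \<in> hom C a b \<Longrightarrow> x \<in> Xo b \<Longrightarrow> Xm u x \<in> Xo a"
  using restrict_closed by (auto simp: hom_iff)

lemma restrict_hom_comp:
  "u \<in> hom C a b \<Longrightarrow> v \<in> hom C b c \<Longrightarrow> x \<in> Xo c \<Longrightarrow> Xm (comp C v u) x = Xm u (Xm v x)"
  using restrict_comp by (auto simp: hom_iff)

lemma pushout_glue:
  assumes "i \<in> cof C" "is_pushout C i g j k" "b \<in> Xo (cod C i)" "c \<in> Xo (cod C g)" "Xm i b = Xm g c"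
  shows "\<exists>d\<in>Xo (cod C j). Xm j d = b \<and> Xm k d = c"
proof -
  have "bij_betw (\<lambda>d. (Xm j d, Xm k d)) (Xo (cod C j))
          {(b, c). b \<in> Xo (cod C i) \<and> c \<in> Xo (cod C g) \<and> Xm i b = Xm g c}"
    using restrict_pushout_ax assms(1,2) by blast
  then have "(b, c) \<in> (\<lambda>d. (Xm j d, Xm k d)) ` Xo (cod C j)"
    using assms(3-5) unfolding bij_betw_def by simp
  then show ?thesis
    by auto
qed

lemma pushout_glue_unique:
  assumes "i \<in> cof C" "is_pushout C i g j k" "d \<in> Xo (cod C j)" "d' \<in> Xo (cod C j)"
    "Xm j d = Xm j d'" "Xm k d = Xm k d'"
  shows "d = d'"
  using restrict_pushout_ax assms unfolding bij_betw_def inj_on_def by blast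

text \<open>To exhibit a homotopy it suffices to factor the codiagonal through a weak equivalence;
  the first factor need not be a cofibration.\<close>

lemma rel_homotopic_by_weak_cylinder:
  assumes i: "i \<in> cof C" and po: "is_pushout C i i in0 in1"
    and u: "u \<in> hom C (cod C in0) U" and q: "q \<in> we C" "q \<in> hom C U (cod C i)"
    and qu: "comp C q (comp C u in0) = idm C (cod C i)" "comp C q (comp C u in1) = idm C (cod C i)"
    and h: "h \<in> Xo U" "Xm (comp C u in0) h = g" "Xm (comp C u in1) h = g'"
  shows "rel_homotopic C Xo Xm i g g'"
proof -
  obtain k p r where c: "rel_cylinder C i in0 in1 k p" and r: "r \<in> hom C (cod C k) U" "comp C r k = u"
    using rel_cylinder_through[OF i po u q qu] by blast
  note e = rel_cylinder_ends[OF c] and d = pushoutD[OF po]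
  have rA: "r \<in> Ar C" "dom C r = cod C k" "cod C r = U" and k: "k \<in> Ar C" "dom C k = cod C in0"
    using r(1) rel_cylinderD(3,4)[OF c] cof_Ar by (simp_all add: hom_iff)
  have "Xm (comp C k in0) (Xm r h) = g" "Xm (comp C k in1) (Xm r h) = g'"
    using rA k d h e(1,2) by (simp_all add: hom_iff r(2) flip: comp_assoc restrict_comp)
  moreover have "Xm r h \<in> Xo (cod C k)"
    using restrict_closed[OF rA(1)] rA h(1) by simp
  ultimately show ?thesis
    unfolding rel_homotopic_def using c by blast
qed

lemma rel_homotopic_refl:
  assumes i: "i \<in> cof C" and g: "g \<in> Xo (cod C i)"
  shows "rel_homotopic C Xo Xm i g g"
proof -
  obtain in0 in1 where po: "is_pushout C i i in0 in1"
    using pushout_ex[OF i cof_Ar[OF i]] by blast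
  note d = pushoutD[OF po]
  have B: "cod C i \<in> Ob C"
    using dom_cod_Ob d(1) by blast
  have "idm C (cod C i) \<in> hom C (cod C i) (cod C i)"
    using B by (simp add: hom_iff)
  then obtain nabla where nabla: "nabla \<in> hom C (cod C in0) (cod C i)"
    "comp C nabla in0 = idm C (cod C i)" "comp C nabla in1 = idm C (cod C i)"
    using pushout_induced[OF po _ _ refl] by blast
  have "comp C (idm C (cod C i)) (comp C nabla in0) = idm C (cod C i)"
    and "comp C (idm C (cod C i)) (comp C nabla in1) = idm C (cod C i)"
    and "Xm (comp C nabla in0) g = g" and "Xm (comp C nabla in1) g = g"
    using nabla(2,3) B g by (simp_all add: restrict_idm)
  then show ?thesis
    using rel_homotopic_by_weak_cylinder[OF i po nabla(1) idm_we[OF B] \<open>idm C (cod C i) \<in> _\<close>] g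
    by blast
qed

lemma rel_homotopic_sym:
  "rel_homotopic C Xo Xm i g g' \<Longrightarrow> rel_homotopic C Xo Xm i g' g"
  unfolding rel_homotopic_def using rel_cylinder_swap by blast

lemma rel_homotopic_trans:
  assumes "rel_homotopic C Xo Xm i g g'" and "rel_homotopic C Xo Xm i g' g''"
  shows "rel_homotopic C Xo Xm i g g''"
proof -
  obtain in0 in1 k p h where c: "rel_cylinder C i in0 in1 k p" "h \<in> Xo (cod C k)"
    "Xm (comp C k in0) h = g" "Xm (comp C k in1) h = g'"
    using assms(1) unfolding rel_homotopic_def by blast
  obtain in0' in1' k' p' h' where c': "rel_cylinder C i in0' in1' k' p'" "h' \<in> Xo (cod C k')"
    "Xm (comp C k' in0') h' = g'" "Xm (comp C k' in1') h' = g''"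
    using assms(2) unfolding rel_homotopic_def by blast
  note e = rel_cylinder_ends[OF c(1)] and e' = rel_cylinder_ends[OF c'(1)]
  have k'0: "comp C k' in0' \<in> cof C"
    using rel_cylinder_end_trivial_cof[OF rel_cylinder_swap[OF c'(1)]] by simp
  \<comment> \<open>glue the two cylinders along the common end carrying \<open>g'\<close>\<close>
  have "comp C k in1 \<in> Ar C" "dom C (comp C k in1) = dom C (comp C k' in0')"
    using e(2) e'(1) by (simp_all add: hom_iff)
  then obtain a' a where J: "is_pushout C (comp C k' in0') (comp C k in1) a' a"
    using pushout_ex[OF k'0] by blast
  note Jd = pushoutD[OF J]
  obtain z where z: "z \<in> Xo (cod C a')" "Xm a' z = h'" "Xm a z = h"
    using pushout_glue[OF k'0 J] c(2,4) c'(2,3) e(2) e'(1) Jd(8) by (auto simp: hom_iff)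
  obtain u q where u: "u \<in> hom C (cod C in0) (cod C a')" "comp C u in0 = comp C a (comp C k in0)"
    "comp C u in1 = comp C a' (comp C k' in1')" and q: "q \<in> we C" "q \<in> hom C (cod C a') (cod C i)"
    "comp C q (comp C u in0) = idm C (cod C i)" "comp C q (comp C u in1) = idm C (cod C i)"
    using rel_cylinder_compose[OF c(1) c'(1) J] by blast
  have "Xm (comp C u in0) z = g" "Xm (comp C u in1) z = g''"
    using z c(3) c'(4) Jd e(1,2) e'(1,2) by (simp_all add: u(2,3) restrict_comp hom_iff)
  then show ?thesis
    using rel_homotopic_by_weak_cylinder[OF rel_cylinderD(1,2)[OF c(1)] u(1) q] z(1) by blast
qed

lemma pi_rel_equiv:
  assumes "i \<in> cof C"
  shows "equiv (pi_fib C Xo Xm i x) (pi_rel C Xo Xm i x)"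
  unfolding equiv_def refl_on_def sym_def trans_def pi_rel_def pi_fib_def
  using rel_homotopic_refl[OF assms] rel_homotopic_sym rel_homotopic_trans by blast

end

section \<open>Homotopy sets and weak equivalences\<close>

locale presheaf_map = X: presheaf C Xo Xm + Y: presheaf C Yo Ym
  for C :: "('o, 'm) cylcat" and Xo :: "'o \<Rightarrow> 'x set" and Xm and Yo :: "'o \<Rightarrow> 'y set" and Ym +
  fixes f :: "'o \<Rightarrow> 'x \<Rightarrow> 'y"
  assumes psh_mor: "psh_mor C Xo Xm Yo Ym f"
begin

lemma map_hom: "a \<in> Ob C \<Longrightarrow> x \<in> Xo a \<Longrightarrow> f a x \<in> Yo a"
  using psh_mor unfolding psh_mor_def by blast

lemma map_natural: "u \<in> hom C a b \<Longrightarrow> x \<in> Xo b \<Longrightarrow> f a (Xm u x) = Ym u (f b x)"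
  using psh_mor unfolding psh_mor_def hom_def by blast

lemma map_pi_fib:
  assumes "i \<in> cof C" "g \<in> pi_fib C Xo Xm i x"
  shows "f (cod C i) g \<in> pi_fib C Yo Ym i (f (dom C i) x)"
proof -
  have "i \<in> hom C (dom C i) (cod C i)" "cod C i \<in> Ob C"
    using X.cof_Ar[OF assms(1)] X.dom_cod_Ob by (simp_all add: X.hom_iff)
  then show ?thesis
    using assms(2) map_hom map_natural unfolding pi_fib_def by auto
qed

lemma rel_homotopic_map:
  assumes "rel_homotopic C Xo Xm i g g'"
  shows "rel_homotopic C Yo Ym i (f (cod C i) g) (f (cod C i) g')"
proof -
  obtain in0 in1 k p h where c: "rel_cylinder C i in0 in1 k p" "h \<in> Xo (cod C k)"
    "Xm (comp C k in0) h = g" "Xm (comp C k in1) h = g'"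
    using assms unfolding rel_homotopic_def by blast
  note e = X.rel_cylinder_ends[OF c(1)]
  have "cod C k \<in> Ob C"
    using X.hom_Ob[OF e(1)] by simp
  then have "f (cod C k) h \<in> Yo (cod C k)"
    using map_hom c(2) by blast
  moreover have "Ym (comp C k in0) (f (cod C k) h) = f (cod C i) g"
    and "Ym (comp C k in1) (f (cod C k) h) = f (cod C i) g'"
    using map_natural[OF e(1) c(2)] map_natural[OF e(2) c(2)] c(3,4) by simp_all
  ultimately show ?thesis
    unfolding rel_homotopic_def using c(1) by blast
qed

lemma pi_map_class:
  assumes i: "i \<in> cof C" and g: "g \<in> pi_fib C Xo Xm i x"
  shows "pi_map C Yo Ym f i x (pi_rel C Xo Xm i x `` {g})
    = pi_rel C Yo Ym i (f (dom C i) x) `` {f (cod C i) g}"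
proof -
  let ?RX = "pi_rel C Xo Xm i x" and ?RY = "pi_rel C Yo Ym i (f (dom C i) x)"
  have EX: "equiv (pi_fib C Xo Xm i x) ?RX" and EY: "equiv (pi_fib C Yo Ym i (f (dom C i) x)) ?RY"
    using X.pi_rel_equiv Y.pi_rel_equiv i by blast+
  have "?RY `` {f (cod C i) s} = ?RY `` {f (cod C i) g}" if "s \<in> ?RX `` {g}" for s
  proof (rule equiv_class_eq[OF EY])
    have "(g, s) \<in> ?RX"
      using that by blast
    then show "(f (cod C i) s, f (cod C i) g) \<in> ?RY"
      using rel_homotopic_map map_pi_fib[OF i] Y.rel_homotopic_sym unfolding pi_rel_def by blast
  qed
  moreover have "g \<in> ?RX `` {g}"
    using equiv_class_self[OF EX g] .
  ultimately show ?thesis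
    unfolding pi_map_def by blast
qed

lemma pi_map_surj_iff:
  assumes i: "i \<in> cof C"
  shows "pi_map C Yo Ym f i x ` pi_set C Xo Xm i x = pi_set C Yo Ym i (f (dom C i) x) \<longleftrightarrow>
    (\<forall>w\<in>pi_fib C Yo Ym i (f (dom C i) x). \<exists>a\<in>pi_fib C Xo Xm i x.
       rel_homotopic C Yo Ym i (f (cod C i) a) w)"
proof -
  let ?FX = "pi_fib C Xo Xm i x" and ?FY = "pi_fib C Yo Ym i (f (dom C i) x)"
    and ?RY = "pi_rel C Yo Ym i (f (dom C i) x)"
  have EY: "equiv ?FY ?RY"
    using Y.pi_rel_equiv i by blast
  have image: "pi_map C Yo Ym f i x ` pi_set C Xo Xm i x = (\<lambda>a. ?RY `` {f (cod C i) a}) ` ?FX"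
    unfolding pi_set_def quotient_def using pi_map_class[OF i] by auto
  have "(\<lambda>a. ?RY `` {f (cod C i) a}) ` ?FX \<subseteq> ?FY // ?RY"
    by (intro image_subsetI quotientI map_pi_fib[OF i])
  then have "pi_map C Yo Ym f i x ` pi_set C Xo Xm i x = pi_set C Yo Ym i (f (dom C i) x) \<longleftrightarrow>
      ?FY // ?RY \<subseteq> (\<lambda>a. ?RY `` {f (cod C i) a}) ` ?FX"
    unfolding image pi_set_def[of C Yo Ym] by blast
  also have "\<dots> \<longleftrightarrow> (\<forall>w\<in>?FY. ?RY `` {w} \<in> (\<lambda>a. ?RY `` {f (cod C i) a}) ` ?FX)"
    unfolding quotient_def by blast
  also have "\<dots> \<longleftrightarrow> (\<forall>w\<in>?FY. \<exists>a\<in>?FX. rel_homotopic C Yo Ym i (f (cod C i) a) w)"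
  proof -
    have "?RY `` {w} = ?RY `` {f (cod C i) a} \<longleftrightarrow> rel_homotopic C Yo Ym i (f (cod C i) a) w"
      if "w \<in> ?FY" "a \<in> ?FX" for w a
      using eq_equiv_class_iff[OF EY that(1) map_pi_fib[OF i that(2)]] Y.rel_homotopic_sym
        that(1) map_pi_fib[OF i that(2)] unfolding pi_rel_def by blast
    then show ?thesis
      by (auto simp: image_iff)
  qed
  finally show ?thesis .
qed

lemma psh_weq_iff:
  "psh_weq C Xo Xm Yo Ym f \<longleftrightarrow> (\<forall>i\<in>cof C. \<forall>x\<in>Xo (dom C i).
     \<forall>w\<in>pi_fib C Yo Ym i (f (dom C i) x). \<exists>a\<in>pi_fib C Xo Xm i x. rel_homotopic C Yo Ym i (f (cod C i) a) w)"
  unfolding psh_weq_def pi_fib_def rel_homotopic_def[symmetric] by (auto simp: eq_commute[of "f _ _"]; blast)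

lemma rel_homotopic_reflect:
  assumes weq: "psh_weq C Xo Xm Yo Ym f" and i: "i \<in> cof C"
    and g: "g1 \<in> pi_fib C Xo Xm i x" "g2 \<in> pi_fib C Xo Xm i x"
    and hom: "rel_homotopic C Yo Ym i (f (cod C i) g1) (f (cod C i) g2)"
  shows "rel_homotopic C Xo Xm i g1 g2"
proof -
  obtain in0 in1 k p h where c: "rel_cylinder C i in0 in1 k p" "h \<in> Yo (cod C k)"
    "Ym (comp C k in0) h = f (cod C i) g1" "Ym (comp C k in1) h = f (cod C i) g2"
    using hom unfolding rel_homotopic_def by blast
  note cd = X.rel_cylinderD[OF c(1)] and d = X.pushoutD[OF cd(2)]
  have k: "k \<in> hom C (cod C in0) (cod C k)" and in0: "in0 \<in> hom C (cod C i) (cod C in0)"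
    and in1: "in1 \<in> hom C (cod C i) (cod C in0)"
    using X.cof_Ar[OF cd(3)] cd(4) d by (simp_all add: X.hom_iff)
  \<comment> \<open>the two ends glue to a map from the relative coproduct into \<open>X\<close> \<dots>\<close>
  obtain y where y: "y \<in> Xo (cod C in0)" "Xm in0 y = g1" "Xm in1 y = g2"
    using X.pushout_glue[OF i cd(2)] g d(8) unfolding pi_fib_def by force
  \<comment> \<open>\<dots> whose image is the restriction of the homotopy \<open>h\<close> \<dots>\<close>
  have "Ym k h = f (cod C in0) y"
  proof (rule Y.pushout_glue_unique[OF i cd(2)])
    show "Ym k h \<in> Yo (cod C in0)" "f (cod C in0) y \<in> Yo (cod C in0)"
      using Y.restrict_hom[OF k c(2)] map_hom X.hom_Ob[OF k] y(1) by simp_all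
    show "Ym in0 (Ym k h) = Ym in0 (f (cod C in0) y)" "Ym in1 (Ym k h) = Ym in1 (f (cod C in0) y)"
      using Y.restrict_hom_comp[OF in0 k c(2)] Y.restrict_hom_comp[OF in1 k c(2)] c(3,4) y
        map_natural[OF in0 y(1)] map_natural[OF in1 y(1)] d(8) by simp_all
  qed
  \<comment> \<open>\<dots> so the weak equivalence lifts \<open>h\<close> to a homotopy in \<open>X\<close>\<close>
  then have "h \<in> pi_fib C Yo Ym k (f (dom C k) y)"
    using c(2) cd(4) unfolding pi_fib_def by simp
  then obtain H where H: "H \<in> Xo (cod C k)" "Xm k H = y"
    using weq cd(3) y(1) cd(4) unfolding psh_weq_iff pi_fib_def by force
  have "Xm (comp C k in0) H = g1" "Xm (comp C k in1) H = g2"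
    using X.restrict_hom_comp[OF in0 k H(1)] X.restrict_hom_comp[OF in1 k H(1)] H(2) y(2,3) by simp_all
  then show ?thesis
    unfolding rel_homotopic_def using c(1) H(1) by blast
qed

lemma pi_map_inj_on:
  assumes weq: "psh_weq C Xo Xm Yo Ym f" and i: "i \<in> cof C"
  shows "inj_on (pi_map C Yo Ym f i x) (pi_set C Xo Xm i x)"
proof (rule inj_onI)
  let ?RX = "pi_rel C Xo Xm i x" and ?RY = "pi_rel C Yo Ym i (f (dom C i) x)"
  fix S1 S2
  assume S: "S1 \<in> pi_set C Xo Xm i x" "S2 \<in> pi_set C Xo Xm i x"
    and eq: "pi_map C Yo Ym f i x S1 = pi_map C Yo Ym f i x S2"
  obtain g1 g2 where g: "g1 \<in> pi_fib C Xo Xm i x" "g2 \<in> pi_fib C Xo Xm i x"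
    and S12: "S1 = ?RX `` {g1}" "S2 = ?RX `` {g2}"
    using S unfolding pi_set_def by (auto elim!: quotientE)
  have "?RY `` {f (cod C i) g1} = ?RY `` {f (cod C i) g2}"
    using eq pi_map_class[OF i g(1)] pi_map_class[OF i g(2)] S12 by simp
  then have "rel_homotopic C Yo Ym i (f (cod C i) g1) (f (cod C i) g2)"
    using eq_equiv_class_iff[OF Y.pi_rel_equiv[OF i]] map_pi_fib[OF i] g unfolding pi_rel_def by blast
  then have "(g1, g2) \<in> ?RX"
    using rel_homotopic_reflect[OF weq i g] g unfolding pi_rel_def by blast
  then show "S1 = S2"
    using equiv_class_eq[OF X.pi_rel_equiv[OF i]] S12 by simp
qed

end

theorem mainTheorem6:
  fixes C :: "('o, 'm) cylcat"
    and Xo :: "'o \<Rightarrow> 'x set" and Xm :: "'m \<Rightarrow> 'x \<Rightarrow> 'x"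
    and Yo :: "'o \<Rightarrow> 'y set" and Ym :: "'m \<Rightarrow> 'y \<Rightarrow> 'y"
    and f :: "'o \<Rightarrow> 'x \<Rightarrow> 'y"
  assumes "cylinder_category C"
    and "is_presheaf C Xo Xm" and "is_presheaf C Yo Ym"
    and "psh_mor C Xo Xm Yo Ym f"
  shows "((\<forall>i\<in>cof C. \<forall>x\<in>Xo (dom C i).
             bij_betw (pi_map C Yo Ym f i x) (pi_set C Xo Xm i x) (pi_set C Yo Ym i (f (dom C i) x)))
          \<longleftrightarrow>
          (\<forall>i\<in>cof C. \<forall>x\<in>Xo (dom C i).
             pi_map C Yo Ym f i x ` pi_set C Xo Xm i x = pi_set C Yo Ym i (f (dom C i) x)))
       \<and>
         ((\<forall>i\<in>cof C. \<forall>x\<in>Xo (dom C i).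
             pi_map C Yo Ym f i x ` pi_set C Xo Xm i x = pi_set C Yo Ym i (f (dom C i) x))
          \<longleftrightarrow> psh_weq C Xo Xm Yo Ym f)"
proof -
  interpret presheaf_map C Xo Xm Yo Ym f
    by unfold_locales (fact assms)+
  let ?bij = "\<lambda>i x. bij_betw (pi_map C Yo Ym f i x) (pi_set C Xo Xm i x)
      (pi_set C Yo Ym i (f (dom C i) x))"
  let ?surj = "\<lambda>i x. pi_map C Yo Ym f i x ` pi_set C Xo Xm i x = pi_set C Yo Ym i (f (dom C i) x)"
  have surj_iff_weq: "(\<forall>i\<in>cof C. \<forall>x\<in>Xo (dom C i). ?surj i x) \<longleftrightarrow> psh_weq C Xo Xm Yo Ym f"
    by (simp add: psh_weq_iff pi_map_surj_iff)
  have "(\<forall>i\<in>cof C. \<forall>x\<in>Xo (dom C i). ?bij i x) \<longleftrightarrow> (\<forall>i\<in>cof C. \<forall>x\<in>Xo (dom C i). ?surj i x)"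
  proof
    assume "\<forall>i\<in>cof C. \<forall>x\<in>Xo (dom C i). ?bij i x"
    then show "\<forall>i\<in>cof C. \<forall>x\<in>Xo (dom C i). ?surj i x"
      using bij_betw_imp_surj_on by blast
  next
    assume surj: "\<forall>i\<in>cof C. \<forall>x\<in>Xo (dom C i). ?surj i x"
    then have "psh_weq C Xo Xm Yo Ym f"
      using surj_iff_weq by blast
    then show "\<forall>i\<in>cof C. \<forall>x\<in>Xo (dom C i). ?bij i x"
      using surj pi_map_inj_on unfolding bij_betw_def by blast
  qed
  with surj_iff_weq show ?thesis
    by blast
qed

end
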